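(* Let $G$ be a graph and let $x,y\in V(G)$ be distinct vertices such that $N[x]\cup N[y]=V(G)$ and $d(x)\ge d(y)$. If $d(x)\ge 4$ or $N(x)\cap N[y]\ne\emptyset$, then $G$ admits an antimagic orientation.
   Context: All graphs are finite and simple; $N(v)$ denotes the set of neighbours of $v$, $N[v]=N(v)\cup\{v\}$, and $d(v)$ the degree of $v$. For a digraph $D$ and an injective map $\tau$ from the arc set $A(D)$ to positive integers, $s_{(D,\tau)}(u)$ is the sum of labels of arcs entering $u$ minus the sum of labels of arcs leaving $u$ ($0$ if $u$ is isolated). If $D$ has $m$ arcs, a bijection $\tau:A(D)\to\{1,\dots,m\}$ is an antimagic labeling if the values $s_{(D,\tau)}(u)$ are pairwise distinct over all vertices. $G$ admits an antimagic orientation if some orientation $D$ of $G$ has an antimagic labeling. *)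

theory Defs
  imports Main
begin

definition simple_graph :: "'a set \<Rightarrow> 'a set set \<Rightarrow> bool" where
  "simple_graph V E \<longleftrightarrow> finite V \<and>
     (\<forall>e\<in>E. \<exists>u v. e = {u, v} \<and> u \<noteq> v \<and> u \<in> V \<and> v \<in> V)"

definition nbhd :: "'a set set \<Rightarrow> 'a \<Rightarrow> 'a set" where
  "nbhd E v = {u. {u, v} \<in> E}"

definition closed_nbhd :: "'a set set \<Rightarrow> 'a \<Rightarrow> 'a set" where
  "closed_nbhd E v = insert v (nbhd E v)"

definition degree :: "'a set set \<Rightarrow> 'a \<Rightarrow> nat" where
  "degree E v = card (nbhd E v)"

definition is_orientation :: "'a set set \<Rightarrow> ('a \<times> 'a) set \<Rightarrow> bool" where
  "is_orientation E D \<longleftrightarrow> bij_betw (\<lambda>(u, v). {u, v}) D E"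

definition vertex_sum :: "('a \<times> 'a) set \<Rightarrow> ('a \<times> 'a \<Rightarrow> nat) \<Rightarrow> 'a \<Rightarrow> int" where
  "vertex_sum D \<tau> u =
     (\<Sum>a\<in>{a\<in>D. snd a = u}. int (\<tau> a)) - (\<Sum>a\<in>{a\<in>D. fst a = u}. int (\<tau> a))"

definition antimagic_labeling :: "'a set \<Rightarrow> ('a \<times> 'a) set \<Rightarrow> ('a \<times> 'a \<Rightarrow> nat) \<Rightarrow> bool" where
  "antimagic_labeling V D \<tau> \<longleftrightarrow>
     bij_betw \<tau> D {1..card D} \<and> inj_on (vertex_sum D \<tau>) V"

definition has_antimagic_orientation :: "'a set \<Rightarrow> 'a set set \<Rightarrow> bool" where
  "has_antimagic_orientation V E \<longleftrightarrow>
     (\<exists>D \<tau>. is_orientation E D \<and> antimagic_labeling V D \<tau>)"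

end

theory Submission
  imports Defs
begin

text \<open>Write \<open>W = V - {x, y}\<close>, \<open>A = N(x) - {y}\<close>, \<open>B = N(y) - {x}\<close> and \<open>C = A \<inter> B\<close>, so that
  \<open>W = A \<union> B\<close>, and let \<open>F\<close> be the set of edges inside \<open>W\<close>. By induction on \<open>|F|\<close>, the edges of \<open>F\<close>
  can be oriented and labelled \<open>1, \<dots>, |F|\<close> so that all vertex sums are at most \<open>|F|\<close>. Every
  \<open>w \<in> W\<close> keeps one private edge to \<open>x\<close> or \<open>y\<close>; these edges point away from \<open>W\<close> and get the
  \<open>|W|\<close> largest labels, in the reverse order of the partial sums at \<open>W\<close>. Then the sums on \<open>W\<close>
  are negative and pairwise distinct, while the sums at \<open>x\<close> and \<open>y\<close> are essentially sums of
  labels. These two are separated by orienting \<open>xy\<close>, by redirecting the private edge of a vertex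
  of \<open>C\<close>, or, if there is neither \<open>xy\<close> nor \<open>C\<close>, by a parity argument, which is where
  \<open>d(x) \<ge> 4\<close> is needed.\<close>

definition edge_sum :: "'a set set \<Rightarrow> ('a set \<Rightarrow> 'a) \<Rightarrow> ('a set \<Rightarrow> nat) \<Rightarrow> 'a \<Rightarrow> int" where
  "edge_sum F h l u = (\<Sum>e\<in>F. if u \<in> e then (if h e = u then int (l e) else - int (l e)) else 0)"

lemma edge_sum_Un:
  "finite F \<Longrightarrow> finite G \<Longrightarrow> F \<inter> G = {} \<Longrightarrow> edge_sum (F \<union> G) h l u = edge_sum F h l u + edge_sum G h l u"
  unfolding edge_sum_def by (rule sum.union_disjoint)

lemma edge_sum_cong:
  "(\<And>e. e \<in> F \<Longrightarrow> h e = h' e \<and> l e = l' e) \<Longrightarrow> edge_sum F h l u = edge_sum F h' l' u"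
  unfolding edge_sum_def by (intro sum.cong) auto

lemma edge_sum_eq_0: "(\<And>e. e \<in> F \<Longrightarrow> u \<notin> e) \<Longrightarrow> edge_sum F h l u = 0"
  unfolding edge_sum_def by (intro sum.neutral) auto

lemma simple_graph_edge:
  assumes "simple_graph V E" "e \<in> E"
  obtains a b where "e = {a, b}" "a \<noteq> b" "a \<in> V" "b \<in> V"
  using assms unfolding simple_graph_def by blast

lemma simple_graph_finite_edges: "simple_graph V E \<Longrightarrow> finite E"
  by (rule finite_subset[of _ "Pow V"]) (auto simp: simple_graph_def)

lemma simple_graph_subset: "simple_graph V E \<Longrightarrow> F \<subseteq> E \<Longrightarrow> simple_graph V F"
  unfolding simple_graph_def by blast

lemma edge_sum_eq_in_minus_out:
  assumes "finite E" "\<And>e. e \<in> E \<Longrightarrow> t e \<noteq> h e \<and> e = {t e, h e}"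
  shows "edge_sum E h l u = (\<Sum>e\<in>{e\<in>E. h e = u}. int (l e)) - (\<Sum>e\<in>{e\<in>E. t e = u}. int (l e))"
proof -
  have "edge_sum E h l u = (\<Sum>e\<in>E. (if h e = u then int (l e) else 0) - (if t e = u then int (l e) else 0))"
  proof (unfold edge_sum_def, intro sum.cong refl)
    fix e assume "e \<in> E"
    then have "u \<in> e \<longleftrightarrow> u = h e \<or> u = t e" "t e \<noteq> h e"
      using assms(2) by blast+
    then show "(if u \<in> e then if h e = u then int (l e) else - int (l e) else 0) =
      (if h e = u then int (l e) else 0) - (if t e = u then int (l e) else 0)"
      by auto
  qed
  then show ?thesis
    using assms(1) by (simp add: sum_subtractf sum.inter_filter)
qed

lemma orientation_of_head:
  assumes G: "simple_graph V E" and head: "\<And>e. e \<in> E \<Longrightarrow> h e \<in> e"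
  obtains D where "is_orientation E D" "\<And>u. vertex_sum D (\<lambda>(a, b). l {a, b}) u = edge_sum E h l u"
proof -
  define tail where "tail e = the_elem (e - {h e})" for e
  have tail: "tail e \<noteq> h e \<and> e = {tail e, h e}" if eE: "e \<in> E" for e
  proof -
    obtain a b where "e = {a, b}" "a \<noteq> b" using simple_graph_edge[OF G eE] by blast
    with head[OF eE] show ?thesis unfolding tail_def by (auto simp: insert_Diff_if)
  qed
  define arc where "arc e = (tail e, h e)" for e
  have arc_edge: "(\<lambda>(a, b). {a, b}) (arc e) = e" if "e \<in> E" for e
    using tail[OF that] unfolding arc_def by simp
  then have inj_arc: "inj_on arc E"
    by (metis inj_onI)
  have "is_orientation E (arc ` E)"
    unfolding is_orientation_def using arc_edge inj_arc
    by (auto simp: bij_betw_def inj_on_def image_image)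
  moreover have "vertex_sum (arc ` E) (\<lambda>(a, b). l {a, b}) u = edge_sum E h l u" for u
  proof -
    have sum_arcs: "(\<Sum>a\<in>{a\<in>arc ` E. P a}. int (case a of (a, b) \<Rightarrow> l {a, b})) =
        (\<Sum>e\<in>{e\<in>E. P (arc e)}. int (l e))" for P
    proof -
      have "{a\<in>arc ` E. P a} = arc ` {e\<in>E. P (arc e)}" by auto
      then have "(\<Sum>a\<in>{a\<in>arc ` E. P a}. int (case a of (a, b) \<Rightarrow> l {a, b})) =
          (\<Sum>e\<in>{e\<in>E. P (arc e)}. int (case arc e of (a, b) \<Rightarrow> l {a, b}))"
        using inj_on_subset[OF inj_arc] by (simp add: sum.reindex)
      also have "\<dots> = (\<Sum>e\<in>{e\<in>E. P (arc e)}. int (l e))"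
        using arc_edge by (intro sum.cong) (auto simp: case_prod_unfold)
      finally show ?thesis .
    qed
    have "edge_sum E h l u = (\<Sum>e\<in>{e\<in>E. h e = u}. int (l e)) - (\<Sum>e\<in>{e\<in>E. tail e = u}. int (l e))"
      using simple_graph_finite_edges[OF G] tail by (rule edge_sum_eq_in_minus_out)
    then show ?thesis
      unfolding vertex_sum_def sum_arcs by (simp add: arc_def)
  qed
  ultimately show ?thesis by (rule that)
qed

lemma antimagic_of_edge_sum:
  assumes G: "simple_graph V E" and head: "\<And>e. e \<in> E \<Longrightarrow> h e \<in> e"
    and l: "bij_betw l E {1..card E}" and inj: "inj_on (edge_sum E h l) V"
  shows "has_antimagic_orientation V E"
proof -
  obtain D where D: "is_orientation E D" "\<And>u. vertex_sum D (\<lambda>(a, b). l {a, b}) u = edge_sum E h l u"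
    using orientation_of_head[OF G head] by blast
  have "bij_betw (\<lambda>(a, b). l {a, b}) D {1..card E}"
    using bij_betw_trans[OF D(1)[unfolded is_orientation_def] l] by (simp add: comp_def case_prod_unfold)
  moreover have "card D = card E"
    using D(1) unfolding is_orientation_def by (rule bij_betw_same_card)
  ultimately show ?thesis
    using inj D(1,2) unfolding has_antimagic_orientation_def antimagic_labeling_def
    by (metis inj_on_cong)
qed

lemma edge_sum_arcs:
  assumes "finite I" "inj_on (\<lambda>i. {s i, t i}) I"
    and "\<And>i. i \<in> I \<Longrightarrow> s i \<noteq> t i \<and> h {s i, t i} = t i \<and> l {s i, t i} = k i"
  shows "edge_sum ((\<lambda>i. {s i, t i}) ` I) h l u =
           (\<Sum>i\<in>{i\<in>I. t i = u}. int (k i)) - (\<Sum>i\<in>{i\<in>I. s i = u}. int (k i))"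
proof -
  have "edge_sum ((\<lambda>i. {s i, t i}) ` I) h l u =
          (\<Sum>i\<in>I. (if t i = u then int (k i) else 0) - (if s i = u then int (k i) else 0))"
    unfolding edge_sum_def sum.reindex[OF assms(2)] using assms(3) by (intro sum.cong) auto
  then show ?thesis
    using assms(1) by (simp add: sum_subtractf sum.inter_filter)
qed

lemma simple_graph_nbhd_subset: "simple_graph V E \<Longrightarrow> nbhd E v \<subseteq> V - {v}"
  unfolding simple_graph_def nbhd_def by (auto simp: doubleton_eq_iff)

lemma bij_betw_fun_upd:
  assumes "bij_betw f (A - {a}) (B - {b})" "a \<in> A" "b \<in> B"
  shows "bij_betw (f(a := b)) A B"
proof -
  have "bij_betw (f(a := b)) (A - {a}) (B - {b})"
    using assms(1) by (rule bij_betw_cong[THEN iffD1, rotated]) simp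
  then show ?thesis
    using notIn_Un_bij_betw3[of a "A - {a}" "f(a := b)" "B - {b}"] assms(2,3)
    by (simp add: insert_absorb)
qed

lemma edge_sum_fun_upd:
  assumes "finite F" "e \<in> F" "e = {a, b}" "a \<noteq> b"
  shows "edge_sum F (h(e := b)) (l(e := m)) u =
           edge_sum (F - {e}) h l u + (if u = b then int m else if u = a then - int m else 0)"
proof -
  have "edge_sum F (h(e := b)) (l(e := m)) u =
      edge_sum (F - {e}) (h(e := b)) (l(e := m)) u + edge_sum {e} (h(e := b)) (l(e := m)) u"
    using edge_sum_Un[of "F - {e}" "{e}"] assms(1,2) by (simp add: insert_absorb)
  moreover have "edge_sum (F - {e}) (h(e := b)) (l(e := m)) u = edge_sum (F - {e}) h l u"
    by (rule edge_sum_cong) simp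
  ultimately show ?thesis
    using assms(3,4) by (simp add: edge_sum_def)
qed

lemma edge_sum_fun_upd_le:
  assumes "finite F" "e \<in> F" "e = {a, b}" "a \<noteq> b" "m \<le> n"
    and "\<And>u. edge_sum (F - {e}) h l u \<le> int m" "edge_sum (F - {e}) h l b \<le> 0"
  shows "edge_sum F (h(e := b)) (l(e := m)) u \<le> int n" "edge_sum F (h(e := b)) (l(e := m)) a \<le> 0"
proof -
  note sum = edge_sum_fun_upd[OF assms(1-4), of h l m]
  show "edge_sum F (h(e := b)) (l(e := m)) u \<le> int n"
    using sum[of u] assms(6)[of u] assms(5,7) by (cases "u = b") auto
  show "edge_sum F (h(e := b)) (l(e := m)) a \<le> 0"
    using sum[of a] assms(6)[of a] assms(4) by simp
qed

lemma simple_graph_obtain_edge: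
  assumes "simple_graph V F" "F \<noteq> {}"
  obtains e a b where "e \<in> F" "e = {a, b}" "a \<noteq> b" "b \<noteq> z" "z \<notin> e \<Longrightarrow> \<forall>e'\<in>F. z \<notin> e'"
proof (cases "\<exists>e\<in>F. z \<in> e")
  case True
  then obtain e where e: "e \<in> F" "z \<in> e" by blast
  then obtain c where c: "e = {z, c}" "c \<noteq> z"
    by (metis simple_graph_edge[OF assms(1)] insert_commute insertE singletonD)
  show ?thesis
    by (rule that[of e z c]) (use e c in auto)
next
  case False
  obtain e where "e \<in> F" using assms(2) by blast
  moreover obtain a b where "e = {a, b}" "a \<noteq> b"
    using simple_graph_edge[OF assms(1) \<open>e \<in> F\<close>] by blast
  ultimately show ?thesis using that False by blast
qed

text \<open>The extra condition at the prescribed vertex \<open>z\<close> makes the induction work: the edge removed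
  from \<open>F\<close> receives the largest label and is oriented towards an end whose sum was made
  non-positive.\<close>

lemma exists_labelling_edge_sum_le:
  assumes "simple_graph V F" "finite K" "card K = card F" "\<forall>k\<in>K. k \<le> n"
  shows "\<exists>h l. (\<forall>e\<in>F. h e \<in> e) \<and> bij_betw l F K \<and>
           (\<forall>u. edge_sum F h l u \<le> int n) \<and> edge_sum F h l z \<le> 0"
  using assms
proof (induction "card F" arbitrary: F K n z rule: less_induct)
  case less
  have finF: "finite F" using simple_graph_finite_edges[OF less.prems(1)] .
  show ?case
  proof (cases "F = {}")
    case True
    then show ?thesis using less.prems(2,3) by (auto simp: edge_sum_def bij_betw_def)
  next
    case False
    obtain e a b where e: "e \<in> F" "e = {a, b}" "a \<noteq> b" "b \<noteq> z"
      and z: "z \<notin> e \<Longrightarrow> \<forall>e'\<in>F. z \<notin> e'"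
      using simple_graph_obtain_edge[OF less.prems(1) False, of z] by blast
    define m where "m = Max K"
    have "K \<noteq> {}" using False finF less.prems(3) by auto
    then have m: "m \<in> K" "m \<le> n"
      using less.prems(2,4) unfolding m_def by auto
    have below_m: "\<forall>k\<in>K - {m}. k \<le> m"
      using less.prems(2) unfolding m_def by simp
    have "card (F - {e}) < card F"
      using finF e(1) by (rule card_Diff1_less)
    moreover have "card (K - {m}) = card (F - {e})"
      using finF e(1) m(1) less.prems(2,3) by simp
    ultimately obtain h' l' where IH: "\<forall>e'\<in>F - {e}. h' e' \<in> e'" "bij_betw l' (F - {e}) (K - {m})"
      "\<forall>u. edge_sum (F - {e}) h' l' u \<le> int m" "edge_sum (F - {e}) h' l' b \<le> 0"
      using less.hyps[of "F - {e}" "K - {m}" m b] simple_graph_subset[OF less.prems(1) Diff_subset]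
        less.prems(2) below_m by auto
    have "\<forall>e'\<in>F. (h'(e := b)) e' \<in> e'"
      using IH(1) e(2) by simp
    moreover have "bij_betw (l'(e := m)) F K"
      using IH(2) e(1) m(1) by (rule bij_betw_fun_upd)
    moreover have bounds: "edge_sum F (h'(e := b)) (l'(e := m)) u \<le> int n"
      "edge_sum F (h'(e := b)) (l'(e := m)) a \<le> 0" for u
      by (intro edge_sum_fun_upd_le[OF finF e(1-3) m(2)]; use IH(3,4) in blast)+
    moreover have "edge_sum F (h'(e := b)) (l'(e := m)) z \<le> 0"
      using bounds(2) z e by (cases "z \<in> e") (auto simp: edge_sum_eq_0)
    ultimately show ?thesis by blast
  qed
qed

lemma exists_bij_betw_antitone:
  fixes \<kappa> :: "'a \<Rightarrow> 'b::linorder" and Q :: "'c::linorder set"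
  assumes "finite W" "finite Q" "card Q = card W"
  shows "\<exists>p. bij_betw p W Q \<and> (\<forall>u\<in>W. \<forall>v\<in>W. \<kappa> u < \<kappa> v \<longrightarrow> p v < p u)"
  using assms
proof (induction "card W" arbitrary: W Q)
  case 0
  then show ?case by (simp add: bij_betw_def)
next
  case (Suc n)
  obtain w where w: "w \<in> W" "\<forall>u\<in>W. \<kappa> w \<le> \<kappa> u"
    using Suc.hyps(2) Suc.prems(1) arg_min_if_finite(1,2)[of W \<kappa>]
    by (metis card.empty empty_iff nat.distinct(1) not_le)
  define q where "q = Max Q"
  have "Q \<noteq> {}" using Suc.hyps(2) Suc.prems by auto
  then have q: "q \<in> Q" "\<forall>r\<in>Q. r \<le> q"
    using Suc.prems(2) unfolding q_def by auto
  obtain p where p: "bij_betw p (W - {w}) (Q - {q})"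
    "\<forall>u\<in>W - {w}. \<forall>v\<in>W - {w}. \<kappa> u < \<kappa> v \<longrightarrow> p v < p u"
    using Suc.hyps(1)[of "W - {w}" "Q - {q}"] Suc.hyps(2) Suc.prems w(1) q(1)
    by (metis card_Diff_singleton diff_Suc_1 finite_Diff)
  have "bij_betw (p(w := q)) W Q"
    using p(1) w(1) q(1) by (rule bij_betw_fun_upd)
  moreover have "p u < q" if "u \<in> W - {w}" for u
  proof -
    have "p u \<in> Q - {q}" using p(1) that by (auto simp: bij_betw_def)
    then show ?thesis using q(2) by (auto simp: order.strict_iff_order)
  qed
  ultimately show ?case
    using p(2) w by (intro exI[of _ "p(w := q)"]) (auto simp: not_less[symmetric])
qed

lemma inj_on_diff_antitone:
  fixes s :: "'a \<Rightarrow> int" and \<kappa> :: "'a \<Rightarrow> 'b::linorder"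
  assumes "inj_on p W" and p: "\<forall>u\<in>W. \<forall>v\<in>W. \<kappa> u < \<kappa> v \<longrightarrow> p v < p u"
    and \<kappa>: "\<forall>u\<in>W. \<forall>v\<in>W. s u < s v \<longrightarrow> \<kappa> u < \<kappa> v"
  shows "inj_on (\<lambda>u. s u - int (p u)) W"
proof (rule inj_onI)
  fix u v assume uv: "u \<in> W" "v \<in> W" and eq: "s u - int (p u) = s v - int (p v)"
  have "\<not> s u < s v" and "\<not> s v < s u"
    using p \<kappa> uv eq by (metis diff_strict_mono of_nat_less_iff less_irrefl)+
  then have "p u = p v" using eq by simp
  then show "u = v" using \<open>inj_on p W\<close> uv by (simp add: inj_on_def)
qed

lemma add_le_sum:
  fixes g :: "'a \<Rightarrow> 'b::ordered_comm_monoid_add"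
  assumes "finite S" "a \<in> S" "b \<in> S" "a \<noteq> b" "\<And>s. s \<in> S \<Longrightarrow> 0 \<le> g s"
  shows "g a + g b \<le> sum g S"
proof -
  have "sum g {a, b} \<le> sum g S"
    using assms by (intro sum_mono2) auto
  then show ?thesis using assms(4) by simp
qed

lemma three_le_sum_if_inj:
  fixes g :: "'a \<Rightarrow> nat"
  assumes "finite S" "2 \<le> card S" "inj_on g S" "\<And>s. s \<in> S \<Longrightarrow> 0 < g s"
  shows "3 \<le> sum g S"
proof -
  have "\<not> (\<forall>a\<in>S. \<forall>b\<in>S. a = b)"
    using assms(2) card_le_Suc0_iff_eq[OF assms(1)] by auto
  then obtain a b where ab: "a \<in> S" "b \<in> S" "a \<noteq> b" by blast
  then have "g a \<noteq> g b" "0 < g a" "0 < g b"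
    using assms(3,4) by (auto simp: inj_on_def)
  moreover have "g a + g b \<le> sum g S"
    using assms(1) ab by (rule add_le_sum) simp
  ultimately show ?thesis by linarith
qed

lemma sum_less_sum_if_dominated:
  fixes g :: "'a \<Rightarrow> nat"
  assumes "finite A" "A \<noteq> {}" "card B \<le> card A"
    and "\<And>a. a \<in> A \<Longrightarrow> 0 < g a" and "\<And>a b. a \<in> A \<Longrightarrow> b \<in> B \<Longrightarrow> g b < g a"
  shows "sum g B < sum g A"
proof -
  define \<mu> where "\<mu> = Min (g ` A)"
  have "\<mu> \<in> g ` A"
    using assms(1,2) unfolding \<mu>_def by simp
  then obtain a where "a \<in> A" "g a = \<mu>" by blast
  then have "\<mu> > 0" "\<forall>b\<in>B. g b \<le> \<mu> - 1"
    using assms(4,5) by (fastforce intro: less_imp_le_nat)+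
  then have "sum g B \<le> card B * (\<mu> - 1)"
    using sum_bounded_above[of B g "\<mu> - 1"] by simp
  also have "\<dots> \<le> card A * (\<mu> - 1)"
    using assms(3) by simp
  also have "\<dots> < card A * \<mu>"
    using \<open>\<mu> > 0\<close> assms(1,2) by (simp add: card_gt_0_iff)
  also have "\<dots> \<le> sum g A"
    using sum_bounded_below[of A \<mu> g] assms(1) unfolding \<mu>_def by simp
  finally show ?thesis .
qed

locale dominating_pair =
  fixes V :: "'a set" and E :: "'a set set" and x y :: 'a
  assumes graph: "simple_graph V E"
    and x_in_V: "x \<in> V" and y_in_V: "y \<in> V" and x_ne_y: "x \<noteq> y"
    and dominating: "closed_nbhd E x \<union> closed_nbhd E y = V"
begin

definition W :: "'a set" where "W = V - {x, y}"
definition A :: "'a set" where "A = nbhd E x - {y}"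
definition B :: "'a set" where "B = nbhd E y - {x}"
definition C :: "'a set" where "C = A \<inter> B"
definition F :: "'a set set" where "F = {e \<in> E. e \<subseteq> W}"

lemma finite_W: "finite W"
  using graph unfolding W_def simple_graph_def by simp

lemma x_notin_W: "x \<notin> W" and y_notin_W: "y \<notin> W"
  unfolding W_def by auto

lemma V_eq: "V = insert x (insert y W)"
  using x_in_V y_in_V unfolding W_def by auto

lemma A_subset_W: "A \<subseteq> W" and B_subset_W: "B \<subseteq> W"
  using simple_graph_nbhd_subset[OF graph] unfolding A_def B_def W_def by blast+

lemma W_eq: "W = A \<union> B"
  using A_subset_W B_subset_W dominating
  unfolding W_def A_def B_def closed_nbhd_def by auto

lemma finite_A: "finite A" and finite_B: "finite B" and finite_C: "finite C"
  using finite_W W_eq unfolding C_def by (auto intro: finite_subset)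

lemma C_subset_A: "C \<subseteq> A" and C_subset_B: "C \<subseteq> B"
  unfolding C_def by auto

lemma edge_x_iff: "w \<in> W \<Longrightarrow> {w, x} \<in> E \<longleftrightarrow> w \<in> A"
  using y_notin_W unfolding A_def nbhd_def by auto

lemma edge_y_iff: "w \<in> W \<Longrightarrow> {w, y} \<in> E \<longleftrightarrow> w \<in> B"
  using x_notin_W unfolding B_def nbhd_def by auto

lemma simple_graph_F: "simple_graph V F"
  using graph unfolding F_def by (rule simple_graph_subset) auto

lemma finite_F: "finite F"
  using simple_graph_F by (rule simple_graph_finite_edges)

lemma degree_x: "degree E x = card A + of_bool ({x, y} \<in> E)"
proof (cases "{x, y} \<in> E")
  case True
  then have "nbhd E x = insert y A" "y \<notin> A"
    unfolding A_def nbhd_def by (auto simp: insert_commute)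
  then show ?thesis using True finite_A by (simp add: degree_def)
next
  case False
  then have "nbhd E x = A"
    unfolding A_def nbhd_def by (auto simp: insert_commute)
  then show ?thesis using False by (simp add: degree_def)
qed

lemma degree_y: "degree E y = card B + of_bool ({x, y} \<in> E)"
proof (cases "{x, y} \<in> E")
  case True
  then have "nbhd E y = insert x B" "x \<notin> B"
    unfolding B_def nbhd_def by auto
  then show ?thesis using True finite_B by (simp add: degree_def)
next
  case False
  then have "nbhd E y = B"
    unfolding B_def nbhd_def by auto
  then show ?thesis using False by (simp add: degree_def)
qed

text \<open>The private edge of \<open>w \<in> W\<close> goes to \<open>x\<close> if \<open>w \<in> A - Z\<close> and to \<open>y\<close> otherwise; a vertex of
  \<open>C\<close> also has a secondary edge to the other end. Here \<open>Z \<subseteq> C\<close> is the set of vertices of \<open>C\<close>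
  whose private edge is redirected to \<open>y\<close>.\<close>

definition private_end :: "'a set \<Rightarrow> 'a \<Rightarrow> 'a" where
  "private_end Z w = (if w \<in> A - Z then x else y)"

definition second_end :: "'a set \<Rightarrow> 'a \<Rightarrow> 'a" where
  "second_end Z w = (if w \<in> A - Z then y else x)"

definition private_edges :: "'a set \<Rightarrow> 'a set set" where
  "private_edges Z = (\<lambda>w. {w, private_end Z w}) ` W"

definition secondary_edges :: "'a set \<Rightarrow> 'a set set" where
  "secondary_edges Z = (\<lambda>c. {c, second_end Z c}) ` C"

definition xy_edges :: "'a set set" where
  "xy_edges = (if {x, y} \<in> E then {{x, y}} else {})"

lemma private_end_ne_second_end: "private_end Z w \<noteq> second_end Z w"
  using x_ne_y by (simp add: private_end_def second_end_def)

lemma star_edge_split: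
  assumes "w \<in> W" "c \<in> {x, y}"
  shows "{w, c} \<inter> W = {w}" "{w, c} - W = {c}" "\<not> {w, c} \<subseteq> W" "{w, c} \<noteq> {x, y}"
  using assms x_notin_W y_notin_W by (auto simp: doubleton_eq_iff)

lemma inj_on_star_edges:
  assumes "\<And>w. w \<in> I \<Longrightarrow> t w \<in> {x, y}" "I \<subseteq> W"
  shows "inj_on (\<lambda>w. {w, t w}) I"
  by (rule inj_on_inverseI[where g = "\<lambda>e. the_elem (e \<inter> W)"]) (use assms star_edge_split in auto)

lemma private_edge_in_E: "Z \<subseteq> C \<Longrightarrow> w \<in> W \<Longrightarrow> {w, private_end Z w} \<in> E"
  using edge_x_iff edge_y_iff W_eq C_subset_B by (auto simp: private_end_def)

lemma secondary_edge_in_E: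
  assumes "c \<in> C"
  shows "{c, second_end Z c} \<in> E"
proof -
  have "c \<in> W" "c \<in> A" "c \<in> B"
    using assms C_subset_A C_subset_B A_subset_W by auto
  then show ?thesis using edge_x_iff edge_y_iff by (simp add: second_end_def)
qed

lemma star_edge_mem:
  assumes "Z \<subseteq> C" "w \<in> W" "c \<in> {x, y}" "{w, c} \<in> E"
  shows "{w, c} \<in> private_edges Z \<union> secondary_edges Z"
proof -
  have "c = private_end Z w \<or> (w \<in> C \<and> c = second_end Z w)"
    using assms edge_x_iff edge_y_iff W_eq unfolding private_end_def second_end_def C_def by auto
  then show ?thesis
    unfolding private_edges_def secondary_edges_def using assms(2) by blast
qed

lemma edge_cases:
  assumes "e \<in> E"
  obtains "e \<in> F" | "e = {x, y}" | w c where "w \<in> W" "c \<in> {x, y}" "e = {w, c}"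
proof -
  obtain a b where ab: "e = {a, b}" "a \<noteq> b" "a \<in> V" "b \<in> V"
    using simple_graph_edge[OF graph assms] by blast
  consider "a \<in> W" "b \<in> W" | "a \<in> W" "b \<in> {x, y}" | "a \<in> {x, y}" "b \<in> W" | "a \<in> {x, y}" "b \<in> {x, y}"
    using ab V_eq by auto
  then show ?thesis
  proof cases
    case 1
    then show ?thesis using that(1) assms ab by (simp add: F_def)
  next
    case 2
    then show ?thesis using that(3) ab by blast
  next
    case 3
    then show ?thesis using that(3)[of b a] ab by (simp add: insert_commute)
  next
    case 4
    then show ?thesis using that(2) ab by (auto simp: insert_commute)
  qed
qed

lemma edges_partition:
  assumes "Z \<subseteq> C"
  shows "E = F \<union> xy_edges \<union> private_edges Z \<union> secondary_edges Z"
proof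
  show "E \<subseteq> F \<union> xy_edges \<union> private_edges Z \<union> secondary_edges Z"
  proof
    fix e assume "e \<in> E"
    then show "e \<in> F \<union> xy_edges \<union> private_edges Z \<union> secondary_edges Z"
    proof (cases rule: edge_cases)
      case 2
      then show ?thesis using \<open>e \<in> E\<close> by (simp add: xy_edges_def)
    next
      case (3 w c)
      then show ?thesis using star_edge_mem[OF assms] \<open>e \<in> E\<close> by blast
    qed blast
  qed
  have "private_edges Z \<subseteq> E" "secondary_edges Z \<subseteq> E"
    using private_edge_in_E[OF assms] secondary_edge_in_E
    unfolding private_edges_def secondary_edges_def by blast+
  then show "F \<union> xy_edges \<union> private_edges Z \<union> secondary_edges Z \<subseteq> E"
    unfolding F_def xy_edges_def by auto
qed

lemma star_edge_obtain:
  assumes "e \<in> private_edges Z \<union> secondary_edges Z"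
  obtains w c where "w \<in> W" "c \<in> {x, y}" "e = {w, c}"
proof -
  consider w where "w \<in> W" "e = {w, private_end Z w}" | w where "w \<in> C" "e = {w, second_end Z w}"
    using assms unfolding private_edges_def secondary_edges_def by blast
  then show ?thesis
  proof cases
    case 1
    show ?thesis by (rule that[of w "private_end Z w"]) (use 1 in \<open>simp_all add: private_end_def\<close>)
  next
    case 2
    then have "w \<in> W" using C_subset_A A_subset_W by blast
    show ?thesis by (rule that[of w "second_end Z w"]) (use 2 \<open>w \<in> W\<close> in \<open>simp_all add: second_end_def\<close>)
  qed
qed

lemma edges_partition_disjoint:
  "F \<inter> xy_edges = {}"
  "(F \<union> xy_edges) \<inter> private_edges Z = {}"
  "(F \<union> xy_edges \<union> private_edges Z) \<inter> secondary_edges Z = {}"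
proof -
  have star: "\<not> e \<subseteq> W \<and> e \<noteq> {x, y}" if e: "e \<in> private_edges Z \<union> secondary_edges Z" for e
  proof -
    obtain w c where "w \<in> W" "c \<in> {x, y}" "e = {w, c}"
      using star_edge_obtain[OF e] .
    then show ?thesis using star_edge_split by simp
  qed
  have "{w, private_end Z w} \<noteq> {c, second_end Z c}" if "w \<in> W" "c \<in> C" for w c
  proof
    assume eq: "{w, private_end Z w} = {c, second_end Z c}"
    have c: "c \<in> W" using that C_subset_A A_subset_W by blast
    have ends: "private_end Z w \<in> {x, y}" "second_end Z c \<in> {x, y}"
      by (simp_all add: private_end_def second_end_def)
    then have "{w, private_end Z w} \<inter> W = {w}" "{c, second_end Z c} \<inter> W = {c}"
      using star_edge_split(1) that(1) c by blast+
    then have "w = c" using eq by simp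
    then show False
      using eq ends c private_end_ne_second_end x_notin_W y_notin_W by (auto simp: doubleton_eq_iff)
  qed
  then have "private_edges Z \<inter> secondary_edges Z = {}"
    unfolding private_edges_def secondary_edges_def by blast
  then show "F \<inter> xy_edges = {}"
    "(F \<union> xy_edges) \<inter> private_edges Z = {}"
    "(F \<union> xy_edges \<union> private_edges Z) \<inter> secondary_edges Z = {}"
    using star x_notin_W unfolding F_def xy_edges_def by auto
qed

lemma card_E: "card E = card F + of_bool ({x, y} \<in> E) + card W + card C"
proof -
  have fin: "finite xy_edges" "finite (private_edges {})" "finite (secondary_edges {})"
    using finite_W finite_C by (simp_all add: xy_edges_def private_edges_def secondary_edges_def)
  have "card E = card (F \<union> xy_edges \<union> private_edges {} \<union> secondary_edges {})"
    using edges_partition[OF empty_subsetI] by (rule arg_cong)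
  also have "\<dots> = card F + card xy_edges + card (private_edges {}) + card (secondary_edges {})"
    by (simp only: card_Un_disjoint finite_Un finite_F fin edges_partition_disjoint)
  also have "card (private_edges {}) = card W"
    unfolding private_edges_def
    by (rule card_image, rule inj_on_star_edges) (auto simp: private_end_def)
  also have "card (secondary_edges {}) = card C"
    unfolding secondary_edges_def using C_subset_A A_subset_W
    by (intro card_image inj_on_star_edges) (auto simp: second_end_def)
  also have "card xy_edges = of_bool ({x, y} \<in> E)"
    unfolding xy_edges_def by simp
  finally show ?thesis by simp
qed

definition W_sum :: "('a set \<Rightarrow> 'a) \<Rightarrow> ('a set \<Rightarrow> nat) \<Rightarrow> ('a \<Rightarrow> nat) \<Rightarrow> 'a \<Rightarrow> int" where
  "W_sum hF lF lam u = edge_sum F hF lF u - (if u \<in> C then int (lam u) else 0)"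

definition L :: nat where
  "L = card F + of_bool ({x, y} \<in> E) + card C"

lemma card_E_eq: "card E = L + card W"
  using card_E by (simp add: L_def)

end

text \<open>\<open>lF\<close>, \<open>p\<close>, \<open>lam\<close> and \<open>lxy\<close> label \<open>F\<close>, the private edges, the secondary edges and \<open>xy\<close>,
  with pairwise disjoint label sets \<open>LF\<close>, \<open>Q\<close>, \<open>LC\<close> and \<open>{lxy}\<close>.\<close>

locale pair_labelling = dominating_pair +
  fixes hF :: "'a set \<Rightarrow> 'a" and lF :: "'a set \<Rightarrow> nat" and lxy :: nat
    and p lam :: "'a \<Rightarrow> nat" and LF Q LC :: "nat set"
  assumes head_F: "\<And>e. e \<in> F \<Longrightarrow> hF e \<in> e"
    and bij_lF: "bij_betw lF F LF" and bij_p: "bij_betw p W Q" and bij_lam: "bij_betw lam C LC"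
    and labels_range: "LF \<union> Q \<union> LC \<subseteq> {1..card E}"
    and labels_disjoint: "LF \<inter> Q = {}" "LF \<inter> LC = {}" "Q \<inter> LC = {}"
    and xy_label: "{x, y} \<in> E \<Longrightarrow> lxy \<in> {1..card E} - (LF \<union> Q \<union> LC)"
begin

definition head :: "bool \<Rightarrow> 'a set \<Rightarrow> 'a" where
  "head \<epsilon> e = (if e \<subseteq> W then hF e else if e = {x, y} then (if \<epsilon> then y else x) else the_elem (e - W))"

definition label :: "'a set \<Rightarrow> 'a set \<Rightarrow> nat" where
  "label Z e = (if e \<subseteq> W then lF e else if e = {x, y} then lxy
     else let w = the_elem (e \<inter> W) in if e = {w, private_end Z w} then p w else lam w)"

definition W_value :: "'a \<Rightarrow> int" where
  "W_value u = W_sum hF lF lam u - int (p u)"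

definition x_sum :: "'a set \<Rightarrow> nat" where
  "x_sum Z = (\<Sum>w\<in>A - Z. p w) + (\<Sum>c\<in>Z. lam c)"

definition y_sum :: "'a set \<Rightarrow> nat" where
  "y_sum Z = (\<Sum>w\<in>W - (A - Z). p w) + (\<Sum>c\<in>C - Z. lam c)"

definition xy_term :: "bool \<Rightarrow> int" where
  "xy_term \<epsilon> = (if {x, y} \<in> E then (if \<epsilon> then int lxy else - int lxy) else 0)"

lemma head_label_star:
  assumes "w \<in> W" "c \<in> {x, y}"
  shows "head \<epsilon> {w, c} = c" "label Z {w, c} = (if c = private_end Z w then p w else lam w)"
proof -
  have "private_end Z w \<in> {x, y}" by (simp add: private_end_def)
  then have "{w, c} = {w, private_end Z w} \<longleftrightarrow> c = private_end Z w"
    using assms x_notin_W y_notin_W by (auto simp: doubleton_eq_iff)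
  then show "head \<epsilon> {w, c} = c" "label Z {w, c} = (if c = private_end Z w then p w else lam w)"
    using star_edge_split[OF assms] assms by (simp_all add: head_def label_def)
qed

lemma head_in_edge:
  assumes "e \<in> E"
  shows "head \<epsilon> e \<in> e"
  using assms
proof (cases rule: edge_cases)
  case 1
  then show ?thesis using head_F by (simp add: head_def F_def)
next
  case 2
  then show ?thesis by (simp add: head_def x_notin_W)
next
  case (3 w c)
  then show ?thesis using head_label_star(1) by simp
qed

lemma bij_label_star_edges:
  assumes "I \<subseteq> W" "\<And>w. w \<in> I \<Longrightarrow> t w \<in> {x, y}"
    and "\<And>w. w \<in> I \<Longrightarrow> label Z {w, t w} = k w" and "bij_betw k I K"
  shows "bij_betw (label Z) ((\<lambda>w. {w, t w}) ` I) K"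
proof -
  have "bij_betw (\<lambda>w. {w, t w}) I ((\<lambda>w. {w, t w}) ` I)"
    using inj_on_star_edges[OF assms(2,1)] by (simp add: bij_betw_def)
  moreover have "bij_betw (label Z \<circ> (\<lambda>w. {w, t w})) I K"
    using assms(4) by (rule bij_betw_cong[THEN iffD1, rotated]) (simp add: assms(3))
  ultimately show ?thesis by (simp add: bij_betw_comp_iff)
qed

lemma bij_label:
  assumes "Z \<subseteq> C"
  shows "bij_betw (label Z) E {1..card E}"
proof -
  define LXY where "LXY = (if {x, y} \<in> E then {lxy} else {})"
  have "bij_betw (label Z) F LF"
    using bij_lF by (rule bij_betw_cong[THEN iffD1, rotated]) (simp add: label_def F_def)
  moreover have "bij_betw (label Z) xy_edges LXY"
    using x_notin_W by (simp add: xy_edges_def LXY_def label_def bij_betw_def)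
  moreover have "bij_betw (label Z) (private_edges Z) Q"
    unfolding private_edges_def
    by (rule bij_label_star_edges[OF subset_refl _ _ bij_p]) (auto simp: private_end_def head_label_star)
  moreover have "bij_betw (label Z) (secondary_edges Z) LC"
  proof -
    have "c \<in> W" "second_end Z c \<in> {x, y}" if "c \<in> C" for c
      using that C_subset_A A_subset_W by (auto simp: second_end_def)
    then show ?thesis
      unfolding secondary_edges_def using not_sym[OF private_end_ne_second_end]
      by (intro bij_label_star_edges[OF _ _ _ bij_lam]) (auto simp: head_label_star)
  qed
  moreover have "LF \<inter> LXY = {}" "(LF \<union> LXY) \<inter> Q = {}" "(LF \<union> LXY \<union> Q) \<inter> LC = {}"
    using labels_disjoint xy_label by (auto simp: LXY_def)
  ultimately have "bij_betw (label Z) (F \<union> xy_edges \<union> private_edges Z \<union> secondary_edges Z)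
      (LF \<union> LXY \<union> Q \<union> LC)"
    by (meson bij_betw_combine)
  \<comment> \<open>Rewriting from right to left: the locale constants on the right depend on \<open>E\<close>.\<close>
  then have "bij_betw (label Z) E (LF \<union> LXY \<union> Q \<union> LC)"
    by (simp only: edges_partition[OF assms, symmetric])
  moreover have "LF \<union> LXY \<union> Q \<union> LC \<subseteq> {1..card E}"
    using labels_range xy_label by (auto simp: LXY_def)
  ultimately show ?thesis
    by (metis bij_betw_same_card card_atLeastAtMost card_subset_eq diff_Suc_1 finite_atLeastAtMost)
qed

lemma edge_sum_decompose:
  assumes "Z \<subseteq> C"
  shows "edge_sum E (head \<epsilon>) (label Z) u =
           edge_sum F hF lF u + edge_sum xy_edges (head \<epsilon>) (label Z) u +
           edge_sum (private_edges Z) (head \<epsilon>) (label Z) u +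
           edge_sum (secondary_edges Z) (head \<epsilon>) (label Z) u"
proof -
  have fin: "finite xy_edges" "finite (private_edges Z)" "finite (secondary_edges Z)"
    using finite_W finite_C by (simp_all add: xy_edges_def private_edges_def secondary_edges_def)
  have "edge_sum F (head \<epsilon>) (label Z) u = edge_sum F hF lF u"
    by (rule edge_sum_cong) (simp add: head_def label_def F_def)
  moreover have "edge_sum (F \<union> xy_edges \<union> private_edges Z \<union> secondary_edges Z) (head \<epsilon>) (label Z) u =
      edge_sum F (head \<epsilon>) (label Z) u + edge_sum xy_edges (head \<epsilon>) (label Z) u +
      edge_sum (private_edges Z) (head \<epsilon>) (label Z) u +
      edge_sum (secondary_edges Z) (head \<epsilon>) (label Z) u"
    by (simp only: edge_sum_Un finite_Un finite_F fin edges_partition_disjoint)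
  ultimately show ?thesis
    by (simp only: edges_partition[OF assms, symmetric])
qed

lemma edge_sum_xy_edges:
  "edge_sum xy_edges (head \<epsilon>) (label Z) u = (if u = y then xy_term \<epsilon> else if u = x then - xy_term \<epsilon> else 0)"
  using x_ne_y x_notin_W by (auto simp: edge_sum_def xy_edges_def xy_term_def head_def label_def)

lemma edge_sum_star_edges:
  assumes "I \<subseteq> W" "\<And>w. w \<in> I \<Longrightarrow> t w \<in> {x, y}" "\<And>w. w \<in> I \<Longrightarrow> label Z {w, t w} = k w"
  shows "edge_sum ((\<lambda>w. {w, t w}) ` I) (head \<epsilon>) (label Z) u =
           int (\<Sum>w\<in>{w\<in>I. t w = u}. k w) - (if u \<in> I then int (k u) else 0)"
proof -
  have "finite I" using finite_W assms(1) by (rule finite_subset[rotated])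
  have "w \<noteq> t w" "head \<epsilon> {w, t w} = t w" if "w \<in> I" for w
  proof -
    have "w \<in> W" "t w \<in> {x, y}" using assms(1,2) that by auto
    then show "w \<noteq> t w" "head \<epsilon> {w, t w} = t w"
      using x_notin_W y_notin_W head_label_star(1) by auto
  qed
  then have "edge_sum ((\<lambda>w. {w, t w}) ` I) (head \<epsilon>) (label Z) u =
      (\<Sum>w\<in>{w\<in>I. t w = u}. int (k w)) - (\<Sum>w\<in>{w\<in>I. w = u}. int (k w))"
    using assms(3) by (intro edge_sum_arcs[OF \<open>finite I\<close> inj_on_star_edges[OF assms(2,1)]]) auto
  also have "{w\<in>I. w = u} = (if u \<in> I then {u} else {})" by auto
  finally show ?thesis by (simp add: of_nat_sum)
qed

lemma edge_sum_private_edges: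
  "edge_sum (private_edges Z) (head \<epsilon>) (label Z) u =
     int (\<Sum>w\<in>{w\<in>W. private_end Z w = u}. p w) - (if u \<in> W then int (p u) else 0)"
  unfolding private_edges_def
  by (rule edge_sum_star_edges) (auto simp: private_end_def head_label_star)

lemma edge_sum_secondary_edges:
  "edge_sum (secondary_edges Z) (head \<epsilon>) (label Z) u =
     int (\<Sum>c\<in>{c\<in>C. second_end Z c = u}. lam c) - (if u \<in> C then int (lam u) else 0)"
proof -
  have "c \<in> W" "second_end Z c \<in> {x, y}" if "c \<in> C" for c
    using that C_subset_A A_subset_W by (auto simp: second_end_def)
  then show ?thesis
    unfolding secondary_edges_def using not_sym[OF private_end_ne_second_end]
    by (intro edge_sum_star_edges) (auto simp: head_label_star)
qed

lemma edge_sum_F_outside: "u \<notin> W \<Longrightarrow> edge_sum F hF lF u = 0"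
  by (rule edge_sum_eq_0) (auto simp: F_def)

lemma edge_sum_W:
  assumes "Z \<subseteq> C" "u \<in> W"
  shows "edge_sum E (head \<epsilon>) (label Z) u = W_value u"
proof -
  have no_arcs: "{w\<in>W. private_end Z w = u} = {}" "{c\<in>C. second_end Z c = u} = {}"
    using assms(2) x_notin_W y_notin_W by (auto simp: private_end_def second_end_def)
  have "u \<noteq> x" "u \<noteq> y"
    using assms(2) x_notin_W y_notin_W by auto
  then show ?thesis
    using assms
    by (simp add: edge_sum_decompose edge_sum_xy_edges edge_sum_private_edges
        edge_sum_secondary_edges W_value_def W_sum_def no_arcs)
qed

lemma edge_sum_x:
  assumes "Z \<subseteq> C"
  shows "edge_sum E (head \<epsilon>) (label Z) x = int (x_sum Z) - xy_term \<epsilon>"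
proof -
  have arcs: "{w\<in>W. private_end Z w = x} = A - Z" "{c\<in>C. second_end Z c = x} = Z"
    using assms A_subset_W C_subset_A x_ne_y by (auto simp: private_end_def second_end_def)
  show ?thesis
    using assms x_notin_W x_ne_y C_subset_A A_subset_W
    by (auto simp: arcs edge_sum_decompose edge_sum_xy_edges edge_sum_private_edges
        edge_sum_secondary_edges edge_sum_F_outside x_sum_def)
qed

lemma edge_sum_y:
  assumes "Z \<subseteq> C"
  shows "edge_sum E (head \<epsilon>) (label Z) y = int (y_sum Z) + xy_term \<epsilon>"
proof -
  have arcs: "{w\<in>W. private_end Z w = y} = W - (A - Z)" "{c\<in>C. second_end Z c = y} = C - Z"
    using assms A_subset_W C_subset_A x_ne_y by (auto simp: private_end_def second_end_def)
  show ?thesis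
    using assms y_notin_W x_ne_y C_subset_A A_subset_W
    by (auto simp: arcs edge_sum_decompose edge_sum_xy_edges edge_sum_private_edges
        edge_sum_secondary_edges edge_sum_F_outside y_sum_def)
qed

lemma antimagic_if_values_distinct:
  assumes "Z \<subseteq> C" and "inj_on W_value W"
    and "int (x_sum Z) - xy_term \<epsilon> \<noteq> int (y_sum Z) + xy_term \<epsilon>"
    and "int (x_sum Z) - xy_term \<epsilon> \<notin> W_value ` W" "int (y_sum Z) + xy_term \<epsilon> \<notin> W_value ` W"
  shows "has_antimagic_orientation V E"
proof (rule antimagic_of_edge_sum[OF graph head_in_edge bij_label[OF assms(1)]])
  have "inj_on (edge_sum E (head \<epsilon>) (label Z)) W"
    using assms(2) by (rule inj_on_cong[THEN iffD2, rotated]) (simp add: edge_sum_W[OF assms(1)])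
  then have "inj_on (edge_sum E (head \<epsilon>) (label Z)) (insert x (insert y W))"
    using assms(3-5) x_notin_W y_notin_W x_ne_y
    by (simp add: edge_sum_x[OF assms(1)] edge_sum_y[OF assms(1)] edge_sum_W[OF assms(1)] image_iff)
  then show "inj_on (edge_sum E (head \<epsilon>) (label Z)) V"
    by (simp only: V_eq[symmetric])
qed

lemma x_sum_y_sum_swap:
  assumes "c \<in> C"
  shows "x_sum {c} + p c = x_sum {} + lam c" "y_sum {c} + lam c = y_sum {} + p c"
proof -
  have c: "c \<in> A" "c \<in> W" using assms C_subset_A A_subset_W by auto
  show "x_sum {c} + p c = x_sum {} + lam c"
    using c finite_A by (simp add: x_sum_def sum.remove)
  have "W - (A - {c}) = insert c (W - A)" using c by auto
  then show "y_sum {c} + lam c = y_sum {} + p c"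
    using assms c finite_W finite_C by (simp add: y_sum_def sum.remove)
qed

lemma x_sum_plus_y_sum:
  assumes "Z \<subseteq> C"
  shows "x_sum Z + y_sum Z = \<Sum>Q + \<Sum>LC"
proof -
  have "(\<Sum>w\<in>A - Z. p w) + (\<Sum>w\<in>W - (A - Z). p w) = (\<Sum>w\<in>W. p w)"
    using A_subset_W finite_W by (metis Diff_subset order_trans sum.subset_diff add.commute)
  moreover have "(\<Sum>c\<in>Z. lam c) + (\<Sum>c\<in>C - Z. lam c) = (\<Sum>c\<in>C. lam c)"
    using assms finite_C by (metis sum.subset_diff add.commute)
  moreover have "(\<Sum>w\<in>W. p w) = \<Sum>Q" "(\<Sum>c\<in>C. lam c) = \<Sum>LC"
    using sum.reindex_bij_betw[OF bij_p, of id] sum.reindex_bij_betw[OF bij_lam, of id] by simp_all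
  ultimately show ?thesis by (simp add: x_sum_def y_sum_def)
qed

end

text \<open>Ties are broken in favour of \<open>A\<close>, which matters only when \<open>F\<close> and \<open>C\<close> are empty.\<close>

locale standard_labelling = dominating_pair +
  fixes hF :: "'a set \<Rightarrow> 'a" and lF :: "'a set \<Rightarrow> nat" and lam p :: "'a \<Rightarrow> nat"
  assumes head_F: "\<And>e. e \<in> F \<Longrightarrow> hF e \<in> e"
    and bij_lF: "bij_betw lF F {1..card F}"
    and edge_sum_F_le: "\<And>u. edge_sum F hF lF u \<le> int (card F)"
    and bij_lam: "bij_betw lam C {card F + of_bool ({x, y} \<in> E) + 1..L}"
    and bij_p: "bij_betw p W {L + 1..card E}"
    and p_antitone: "\<And>u v. u \<in> W \<Longrightarrow> v \<in> W \<Longrightarrow>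
      2 * W_sum hF lF lam u + of_bool (u \<notin> A) < 2 * W_sum hF lF lam v + of_bool (v \<notin> A) \<Longrightarrow> p v < p u"
begin

sublocale pair_labelling V E x y hF lF "card F + 1" p lam
  "{1..card F}" "{L + 1..card E}" "{card F + of_bool ({x, y} \<in> E) + 1..L}"
  by unfold_locales (use head_F bij_lF bij_p bij_lam card_E_eq in \<open>auto simp: L_def\<close>)

lemma p_bounds: "u \<in> W \<Longrightarrow> L + 1 \<le> p u \<and> p u \<le> card E"
  using bij_p by (auto simp: bij_betw_def)

lemma lam_bounds: "c \<in> C \<Longrightarrow> card F + of_bool ({x, y} \<in> E) + 1 \<le> lam c \<and> lam c \<le> L"
  using bij_lam by (auto simp: bij_betw_def)

lemma inj_on_W_value: "inj_on W_value W"
  unfolding W_value_def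
proof (rule inj_on_diff_antitone[OF bij_betw_imp_inj_on[OF bij_p]])
  let ?rank = "\<lambda>u. 2 * W_sum hF lF lam u + of_bool (u \<notin> A)"
  show "\<forall>u\<in>W. \<forall>v\<in>W. ?rank u < ?rank v \<longrightarrow> p v < p u"
    using p_antitone by blast
  show "\<forall>u\<in>W. \<forall>v\<in>W. W_sum hF lF lam u < W_sum hF lF lam v \<longrightarrow> ?rank u < ?rank v"
    by auto
qed

lemma W_value_le: "u \<in> W \<Longrightarrow> W_value u \<le> int (card F) - int L - 1"
  using edge_sum_F_le[of u] p_bounds[of u] by (simp add: W_value_def W_sum_def)

lemma antimagic_if_sums_differ:
  assumes "{x, y} \<notin> E" "Z \<subseteq> C" "x_sum Z \<noteq> y_sum Z"
  shows "has_antimagic_orientation V E"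
proof (rule antimagic_if_values_distinct[OF assms(2) inj_on_W_value, of True])
  have "W_value u < 0" if "u \<in> W" for u
    using W_value_le[OF that] assms(1) by (simp add: L_def)
  moreover have "xy_term True = 0"
    using assms(1) unfolding xy_term_def by simp
  ultimately show "int (x_sum Z) - xy_term True \<notin> W_value ` W"
    "int (y_sum Z) + xy_term True \<notin> W_value ` W"
    "int (x_sum Z) - xy_term True \<noteq> int (y_sum Z) + xy_term True"
    using assms(3) by force+
qed

lemma antimagic_if_C_nonempty:
  assumes "{x, y} \<notin> E" "C \<noteq> {}"
  shows "has_antimagic_orientation V E"
proof (cases "x_sum {} = y_sum {}")
  case True
  obtain c where c: "c \<in> C" using assms(2) by blast
  then have "c \<in> W" using C_subset_A A_subset_W by blast
  then have "lam c < p c"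
    using lam_bounds[OF c] p_bounds by fastforce
  then have "x_sum {c} \<noteq> y_sum {c}"
    using x_sum_y_sum_swap[OF c] True by linarith
  then show ?thesis
    using antimagic_if_sums_differ[OF assms(1)] c by blast
next
  case False
  then show ?thesis using antimagic_if_sums_differ[OF assms(1)] by blast
qed

lemma x_sum_empty: "x_sum {} = (\<Sum>w\<in>A. p w)"
  by (simp add: x_sum_def)

lemma x_sum_empty_ge: "a \<in> A \<Longrightarrow> L + 1 \<le> x_sum {}"
  using member_le_sum[of a A p] finite_A p_bounds A_subset_W
  by (fastforce simp: x_sum_empty)

lemma y_sum_empty_ge: "b \<in> B \<Longrightarrow> card F + of_bool ({x, y} \<in> E) + 1 \<le> y_sum {}"
proof (cases "b \<in> A")
  case True
  assume "b \<in> B"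
  with True have "b \<in> C" by (simp add: C_def)
  then have "lam b \<le> (\<Sum>c\<in>C. lam c)" using finite_C by (simp add: member_le_sum)
  then show ?thesis using lam_bounds[OF \<open>b \<in> C\<close>] by (simp add: y_sum_def)
next
  case False
  assume "b \<in> B"
  with False have "b \<in> W - A" using B_subset_W by blast
  then have "p b \<le> (\<Sum>w\<in>W - A. p w)" using finite_W by (intro member_le_sum) auto
  then show ?thesis using p_bounds[of b] \<open>b \<in> W - A\<close> by (simp add: y_sum_def L_def)
qed

lemma card_F_eq_0_if_B_empty:
  assumes "{x, y} \<in> E" "B = {}" "x_sum {} = 2 * card F + 2"
  shows "card F = 0"
proof -
  have W: "W = A" "C = {}" "card E = card F + 2 + card A - 1"
    using W_eq assms(1,2) card_E_eq by (auto simp: C_def L_def)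
  have p: "card F + 2 \<le> p a \<and> p a \<le> card E" if "a \<in> A" for a
    using p_bounds[of a] that W assms(1) by (simp add: L_def)
  show ?thesis
  proof (cases "card A \<le> 1")
    case True
    have "A \<noteq> {}" using assms(3) by (auto simp: x_sum_def)
    then obtain a where "a \<in> A" by blast
    then have "A = {a}" using True finite_A card_le_Suc0_iff_eq by auto
    then show ?thesis using assms(3) p[of a] W(3) by (simp add: x_sum_def)
  next
    case False
    then have "\<not> (\<forall>a\<in>A. \<forall>b\<in>A. a = b)"
      using card_le_Suc0_iff_eq[OF finite_A] by simp
    then obtain a b where "a \<in> A" "b \<in> A" "a \<noteq> b" by blast
    then have "p a + p b \<le> x_sum {}"
      unfolding x_sum_empty by (intro add_le_sum[OF finite_A]) auto
    then show ?thesis using assms(3) p[OF \<open>a \<in> A\<close>] p[OF \<open>b \<in> A\<close>] by linarith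
  qed
qed

lemma antimagic_if_xy:
  assumes "{x, y} \<in> E" "card B \<le> card A"
  shows "has_antimagic_orientation V E"
proof -
  have W_value: "W_value u \<le> -2" if "u \<in> W" for u
    using W_value_le[OF that] assms(1) by (simp add: L_def)
  have xy_term: "xy_term True = int (card F) + 1" "xy_term False = - int (card F) - 1"
    using assms(1) unfolding xy_term_def by simp_all
  have A: "A \<noteq> {}" if "W \<noteq> {}"
    using that W_eq assms(2) finite_A finite_B by auto
  show ?thesis
  proof (cases "int (x_sum {}) - xy_term True = int (y_sum {}) + xy_term True")
    case False
    have "int (x_sum {}) - xy_term True \<notin> W_value ` W"
    proof
      assume "int (x_sum {}) - xy_term True \<in> W_value ` W"
      then obtain a where "a \<in> A" using A by blast
      then show False using x_sum_empty_ge \<open>_ \<in> W_value ` W\<close> W_value xy_term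
        by (force simp: L_def)
    qed
    moreover have "int (y_sum {}) + xy_term True \<notin> W_value ` W"
      using W_value xy_term by force
    ultimately show ?thesis
      using False by (intro antimagic_if_values_distinct[OF empty_subsetI inj_on_W_value, of True])
  next
    case sums_eq: True
    have "int (y_sum {}) + xy_term False \<notin> W_value ` W"
    proof (cases "B = {}")
      case True
      then have "y_sum {} = 0" using W_eq by (simp add: y_sum_def C_def)
      then show ?thesis
        using sums_eq card_F_eq_0_if_B_empty[OF assms(1) True] W_value xy_term by force
    next
      case False
      then show ?thesis using y_sum_empty_ge W_value xy_term assms(1) by force
    qed
    moreover have "int (x_sum {}) - xy_term False \<notin> W_value ` W"
      using W_value xy_term by force
    ultimately show ?thesis
      using sums_eq xy_term
      by (intro antimagic_if_values_distinct[OF empty_subsetI inj_on_W_value, of False]) auto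
  qed
qed

lemma y_sum_empty_if_C_empty: "C = {} \<Longrightarrow> y_sum {} = (\<Sum>w\<in>B. p w)"
  using W_eq by (simp add: y_sum_def C_def Un_Diff Diff_triv Int_commute)

lemma card_F_pos_if_sums_eq:
  assumes "{x, y} \<notin> E" "C = {}" "A \<noteq> {}" "card B \<le> card A" "x_sum {} = y_sum {}"
  shows "0 < card F"
proof (rule ccontr)
  assume "\<not> 0 < card F"
  then have "F = {}" using finite_F by simp
  then have "W_sum hF lF lam u = 0" for u
    using assms(2) by (simp add: W_sum_def edge_sum_def)
  then have "p b < p a" if "a \<in> A" "b \<in> B" for a b
    using p_antitone[of a b] that assms(2) A_subset_W B_subset_W by (auto simp: C_def)
  moreover have "0 < p a" if "a \<in> A" for a
    using p_bounds[of a] that A_subset_W by auto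
  ultimately have "(\<Sum>w\<in>B. p w) < (\<Sum>w\<in>A. p w)"
    using assms(3,4) finite_A by (intro sum_less_sum_if_dominated) auto
  then show False
    using assms(2,5) by (simp add: x_sum_empty y_sum_empty_if_C_empty)
qed

lemma card_B_ge_2_if_sums_eq:
  assumes "{x, y} \<notin> E" "C = {}" "3 \<le> card A" "0 < card F" "x_sum {} = y_sum {}"
  shows "2 \<le> card B"
proof (rule ccontr)
  assume "\<not> 2 \<le> card B"
  then have "card B \<le> 1" by simp
  have p: "card F + 1 \<le> p w \<and> p w \<le> card E" if "w \<in> W" for w
    using p_bounds[OF that] assms(1,2) by (simp add: L_def)
  have "card A * (card F + 1) \<le> x_sum {}"
    unfolding x_sum_empty using sum_bounded_below[of A "card F + 1" p] p A_subset_W by auto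
  moreover have "y_sum {} \<le> card E"
  proof (cases "B = {}")
    case False
    then obtain b where "b \<in> B" by blast
    then have "B = {b}"
      using \<open>card B \<le> 1\<close> card_le_Suc0_iff_eq[OF finite_B] by auto
    then show ?thesis using p[of b] B_subset_W assms(2) by (simp add: y_sum_empty_if_C_empty)
  qed (simp add: y_sum_empty_if_C_empty assms(2))
  moreover have "card E \<le> card F + card A + 1"
    using card_E_eq W_eq \<open>card B \<le> 1\<close> assms(1,2) card_Un_le[of A B] by (simp add: L_def)
  moreover have "3 * card F \<le> card A * card F"
    using assms(3) by simp
  ultimately show False
    using assms(4,5) by (simp add: algebra_simps)
qed

lemma even_sum_labels_if_sums_eq:
  assumes "{x, y} \<notin> E" "C = {}" "x_sum {} = y_sum {}"
  shows "even (\<Sum>{card F + 1..card E})"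
proof -
  have "x_sum {} + y_sum {} = \<Sum>{card F + 1..card E}"
    using x_sum_plus_y_sum[OF empty_subsetI] assms(1,2) by (simp add: L_def)
  then show ?thesis using assms(3) by presburger
qed

end

context dominating_pair
begin

lemma exists_standard_labelling:
  obtains hF lF lam p where "standard_labelling V E x y hF lF lam p"
proof -
  have "\<exists>h l. (\<forall>e\<in>F. h e \<in> e) \<and> bij_betw l F {1..card F} \<and>
      (\<forall>u. edge_sum F h l u \<le> int (card F)) \<and> edge_sum F h l x \<le> 0"
    by (rule exists_labelling_edge_sum_le[OF simple_graph_F]) auto
  then obtain hF lF where F: "\<forall>e\<in>F. hF e \<in> e" "bij_betw lF F {1..card F}"
    "\<forall>u. edge_sum F hF lF u \<le> int (card F)"
    by blast
  have "card {card F + of_bool ({x, y} \<in> E) + 1..L} = card C"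
    by (simp add: L_def)
  then obtain lam where lam: "bij_betw lam C {card F + of_bool ({x, y} \<in> E) + 1..L}"
    using finite_same_card_bij[OF finite_C finite_atLeastAtMost] by metis
  let ?rank = "\<lambda>u. 2 * W_sum hF lF lam u + of_bool (u \<notin> A)"
  obtain p where p: "bij_betw p W {L + 1..card E}" "\<forall>u\<in>W. \<forall>v\<in>W. ?rank u < ?rank v \<longrightarrow> p v < p u"
    using exists_bij_betw_antitone[OF finite_W finite_atLeastAtMost, of "L + 1" "card E" ?rank] card_E_eq
    by auto
  have "standard_labelling V E x y hF lF lam p"
    unfolding standard_labelling_def standard_labelling_axioms_def
    using dominating_pair_axioms F lam p by blast
  then show ?thesis by (rule that)
qed

lemma exists_parity_labelling:
  assumes "{x, y} \<notin> E" "C = {}" "0 < card F" "W \<noteq> {}"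
  obtains hF lF p where
    "pair_labelling V E x y hF lF 0 p (\<lambda>_. 0) ({1..card F + 1} - {card F})
       (insert (card F) {card F + 2..card E}) {}"
    "\<And>u. edge_sum F hF lF u \<le> int (card F + 1)"
    "\<And>u v. u \<in> W \<Longrightarrow> v \<in> W \<Longrightarrow> edge_sum F hF lF u < edge_sum F hF lF v \<Longrightarrow> p v < p u"
proof -
  define LF where "LF = {1..card F + 1} - {card F}"
  define Q where "Q = insert (card F) {card F + 2..card E}"
  have E: "card E = card F + card W"
    using card_E_eq assms(1,2) by (simp add: L_def)
  have "\<exists>h l. (\<forall>e\<in>F. h e \<in> e) \<and> bij_betw l F LF \<and>
      (\<forall>u. edge_sum F h l u \<le> int (card F + 1)) \<and> edge_sum F h l x \<le> 0"
    using assms(3) by (intro exists_labelling_edge_sum_le[OF simple_graph_F]) (auto simp: LF_def)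
  then obtain hF lF where F: "\<forall>e\<in>F. hF e \<in> e" "bij_betw lF F LF"
    "\<forall>u. edge_sum F hF lF u \<le> int (card F + 1)"
    by blast
  have "card Q = card W"
    using E assms(4) finite_W by (simp add: Q_def card_gt_0_iff)
  then obtain p where p: "bij_betw p W Q"
    "\<forall>u\<in>W. \<forall>v\<in>W. edge_sum F hF lF u < edge_sum F hF lF v \<longrightarrow> p v < p u"
    using exists_bij_betw_antitone[OF finite_W _ \<open>card Q = card W\<close>, of "edge_sum F hF lF"]
    by (auto simp: Q_def)
  have "1 \<le> card W" using assms(4) finite_W by (simp add: Suc_le_eq card_gt_0_iff)
  then have "LF \<union> Q \<subseteq> {1..card E}" "LF \<inter> Q = {}"
    using E assms(3) by (auto simp: LF_def Q_def)
  then have "pair_labelling V E x y hF lF 0 p (\<lambda>_. 0) LF Q {}"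
    using F(1,2) p(1) assms(1,2) by unfold_locales (auto simp: bij_betw_def)
  then show ?thesis
    unfolding LF_def Q_def by (rule that) (use F(3) p(2) in blast)+
qed

text \<open>Parity trick: moving the label \<open>|F|\<close> from \<open>F\<close> to the private edges lowers their total by one,
  so \<open>x\<close> and \<open>y\<close> receive sums of different parity.\<close>

lemma antimagic_by_parity:
  assumes "{x, y} \<notin> E" "C = {}" "0 < card F" "2 \<le> card A" "2 \<le> card B"
    and "even (\<Sum>{card F + 1..card E})"
  shows "has_antimagic_orientation V E"
proof -
  define f where "f = card F"
  have "W \<noteq> {}" using assms(4) A_subset_W by auto
  then obtain hF lF p where P:
    "pair_labelling V E x y hF lF 0 p (\<lambda>_. 0) ({1..f + 1} - {f}) (insert f {f + 2..card E}) {}"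
    "\<And>u. edge_sum F hF lF u \<le> int (f + 1)"
    "\<And>u v. u \<in> W \<Longrightarrow> v \<in> W \<Longrightarrow> edge_sum F hF lF u < edge_sum F hF lF v \<Longrightarrow> p v < p u"
    using exists_parity_labelling[OF assms(1-3)] unfolding f_def by blast
  interpret pair_labelling V E x y hF lF 0 p "\<lambda>_. 0" "{1..f + 1} - {f}" "insert f {f + 2..card E}" "{}"
    by (fact P(1))
  have p_ge: "f \<le> p w" "0 < p w" if "w \<in> W" for w
  proof -
    have "p w \<in> insert f {f + 2..card E}" using bij_p that by (auto simp: bij_betw_def)
    then show "f \<le> p w" "0 < p w" using assms(3) by (auto simp: f_def)
  qed
  have inj: "inj_on W_value W"
    unfolding W_value_def using P(3) assms(2)
    by (intro inj_on_diff_antitone[OF bij_betw_imp_inj_on[OF bij_p], where \<kappa> = "edge_sum F hF lF"])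
      (auto simp: W_sum_def)
  have W_value: "W_value u \<le> 1" if "u \<in> W" for u
    using P(2)[of u] p_ge(1)[OF that] assms(2) by (simp add: W_value_def W_sum_def)
  have "3 \<le> x_sum {}" "3 \<le> y_sum {}"
    using three_le_sum_if_inj[OF finite_A assms(4)] three_le_sum_if_inj[OF finite_B assms(5)]
      inj_on_subset[OF bij_betw_imp_inj_on[OF bij_p]] A_subset_W B_subset_W p_ge(2) assms(2) W_eq
    by (auto simp: x_sum_def y_sum_def C_def Un_Diff Diff_triv Int_commute)
  moreover have "odd (x_sum {} + y_sum {})"
  proof -
    have "\<Sum>{f + 1..card E} = f + 1 + \<Sum>{f + 2..card E}"
      using card_E_eq assms(1,2,4) finite_A A_subset_W card_mono[OF finite_W A_subset_W]
      by (simp add: sum.atLeast_Suc_atMost L_def f_def)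
    then show ?thesis
      using x_sum_plus_y_sum[OF empty_subsetI] assms(6) by (simp add: f_def)
  qed
  moreover have "xy_term True = 0"
    using assms(1) unfolding xy_term_def by simp
  ultimately show ?thesis
    using W_value by (intro antimagic_if_values_distinct[OF empty_subsetI inj, of True]) force+
qed

lemma antimagic_orientation:
  assumes "degree E y \<le> degree E x" "4 \<le> degree E x \<or> nbhd E x \<inter> closed_nbhd E y \<noteq> {}"
  shows "has_antimagic_orientation V E"
proof -
  obtain hF lF lam p where "standard_labelling V E x y hF lF lam p"
    by (rule exists_standard_labelling)
  then interpret standard_labelling V E x y hF lF lam p .
  have BA: "card B \<le> card A"
    using assms(1) by (simp add: degree_x degree_y)
  consider "{x, y} \<in> E" | "{x, y} \<notin> E" "C \<noteq> {}" | "{x, y} \<notin> E" "x_sum {} \<noteq> y_sum {}"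
    | "{x, y} \<notin> E" "C = {}" "x_sum {} = y_sum {}"
    by blast
  then show ?thesis
  proof cases
    case 1
    then show ?thesis using antimagic_if_xy BA by blast
  next
    case 2
    then show ?thesis using antimagic_if_C_nonempty by blast
  next
    case 3
    then show ?thesis using antimagic_if_sums_differ by blast
  next
    case 4
    then have "nbhd E x \<inter> closed_nbhd E y = {}"
      by (auto simp: closed_nbhd_def A_def B_def C_def nbhd_def insert_commute)
    then have A: "4 \<le> card A"
      using assms(2) 4 by (simp add: degree_x)
    then have "0 < card F"
      using 4 BA by (intro card_F_pos_if_sums_eq) auto
    then show ?thesis
      using 4 A BA card_B_ge_2_if_sums_eq even_sum_labels_if_sums_eq
      by (intro antimagic_by_parity) auto
  qed
qed

end

theorem theorem2p3:
  fixes V :: "'a set" and E :: "'a set set" and x y :: 'a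
  assumes "simple_graph V E"
    and "x \<in> V" and "y \<in> V" and "x \<noteq> y"
    and "closed_nbhd E x \<union> closed_nbhd E y = V"
    and "degree E x \<ge> degree E y"
    and "degree E x \<ge> 4 \<or> nbhd E x \<inter> closed_nbhd E y \<noteq> {}"
  shows "has_antimagic_orientation V E"
proof -
  interpret dominating_pair V E x y
    using assms(1-5) by unfold_locales
  show ?thesis
    using assms(6,7) by (rule antimagic_orientation)
qed

end
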